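(* Let $A$ be an additive poset, $a\in A$, and $n\ge1$ an integer. There is a bijection between chains $a=a_0<a_1<\cdots<a_n$ in $A$ of length $n$ starting at $a$ and sequences $b_1,\dots,b_n$ of $n$ pairwise independent nonzero elements of $A^a$. It sends the chain to the sequence $b_i=a_{i-1}+a_i$ ($i=1,\dots,n$), and its inverse sends $b_1,\dots,b_n$ to the chain with $a_0=a$ and $a_i=a+b_1+\cdots+b_i$ ($i=1,\dots,n$).
   Context: An additive poset is a pair $(A,\le)$ where $A$ is an abelian group and $\le$ is a partial order on $A$ such that for all $a,b,c\in A$: $(\ast)$ if $b\le a$ and $c\le a$ then $b+c\le a$; $(\ast\ast)$ if $a\le b$ and $a\le c$ then $a\le a+b+c$. Elements $a,b$ are independent if $a\le a+b$ (a symmetric relation). $A^a$ denotes the set of elements of $A$ independent from $a$. We write $x<y$ if $x\le y$ and $x\ne y$; a chain of length $n$ is a sequence $a_0<a_1<\cdots<a_n$. *)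

theory Defs
  imports Main
begin

definition additive_poset :: "('a::ab_group_add \<Rightarrow> 'a \<Rightarrow> bool) \<Rightarrow> bool" where
  "additive_poset le \<longleftrightarrow>
     (\<forall>x. le x x) \<and>
     (\<forall>x y. le x y \<and> le y x \<longrightarrow> x = y) \<and>
     (\<forall>x y z. le x y \<and> le y z \<longrightarrow> le x z) \<and>
     (\<forall>a b c. le b a \<and> le c a \<longrightarrow> le (b + c) a) \<and>
     (\<forall>a b c. le a b \<and> le a c \<longrightarrow> le a (a + b + c))"

definition ap_less :: "('a \<Rightarrow> 'a \<Rightarrow> bool) \<Rightarrow> 'a \<Rightarrow> 'a \<Rightarrow> bool" where
  "ap_less le x y \<longleftrightarrow> le x y \<and> x \<noteq> y"

definition independent :: "('a::ab_group_add \<Rightarrow> 'a \<Rightarrow> bool) \<Rightarrow> 'a \<Rightarrow> 'a \<Rightarrow> bool" where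
  "independent le x y \<longleftrightarrow> le x (x + y)"

definition chains_from :: "('a \<Rightarrow> 'a \<Rightarrow> bool) \<Rightarrow> 'a \<Rightarrow> nat \<Rightarrow> 'a list set" where
  "chains_from le a n = {cs. length cs = Suc n \<and> cs ! 0 = a \<and>
      (\<forall>i<n. ap_less le (cs ! i) (cs ! Suc i))}"

text \<open>Sequences b_1, ..., b_n (list [b_1,...,b_n]) of pairwise independent nonzero
  elements of A^a.\<close>
definition indep_seqs :: "('a::ab_group_add \<Rightarrow> 'a \<Rightarrow> bool) \<Rightarrow> 'a \<Rightarrow> nat \<Rightarrow> 'a list set" where
  "indep_seqs le a n = {bs. length bs = n \<and>
      (\<forall>i<n. bs ! i \<noteq> 0 \<and> independent le a (bs ! i)) \<and>
      (\<forall>i<n. \<forall>j<n. i \<noteq> j \<longrightarrow> independent le (bs ! i) (bs ! j))}"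

definition chain_to_seq :: "nat \<Rightarrow> 'a::ab_group_add list \<Rightarrow> 'a list" where
  "chain_to_seq n cs = map (\<lambda>i. cs ! i + cs ! Suc i) [0..<n]"

definition seq_to_chain :: "'a::ab_group_add \<Rightarrow> nat \<Rightarrow> 'a list \<Rightarrow> 'a list" where
  "seq_to_chain a n bs = map (\<lambda>i. a + sum_list (take i bs)) [0..<Suc n]"

end

theory Submission
  imports Defs
begin

text \<open>Every element of an additive poset has order at most two, since
  \<open>x \<le> x + x + x \<le> x\<close>. Consequently \<open>a\<^sub>i = a + b\<^sub>1 + \<dots> + b\<^sub>i\<close> telescopes against
  \<open>b\<^sub>i = a\<^sub>i\<^sub>-\<^sub>1 + a\<^sub>i\<close>, so the two maps are mutually inverse. The two order axioms
  give the rest: by \<open>(\<ast>)\<close>, \<open>x \<le> y\<close> implies \<open>x + y \<le> y\<close>, so increments over disjoint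
  intervals of a chain lie below each other's endpoints and \<open>(\<ast>\<ast>)\<close> makes them
  independent; conversely \<open>(\<ast>\<ast>)\<close> says independence from \<open>c\<close> is closed under sums,
  so \<open>b\<^sub>i\<close> is independent from \<open>a\<^sub>i\<^sub>-\<^sub>1 = a + b\<^sub>1 + \<dots> + b\<^sub>i\<^sub>-\<^sub>1\<close>, i.e. \<open>a\<^sub>i\<^sub>-\<^sub>1 \<le> a\<^sub>i\<close>.\<close>

lemma seq_to_chain_nth:
  "i \<le> n \<Longrightarrow> seq_to_chain a n bs ! i = a + sum_list (take i bs)"
  unfolding seq_to_chain_def by (simp del: upt_Suc)

lemma seq_to_chain_nth_Suc:
  "i < n \<Longrightarrow> i < length bs \<Longrightarrow>
    seq_to_chain a n bs ! Suc i = seq_to_chain a n bs ! i + bs ! i"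
  by (simp add: seq_to_chain_nth take_Suc_conv_app_nth add.assoc)

context
  fixes le :: "'a::ab_group_add \<Rightarrow> 'a \<Rightarrow> bool"
  assumes ap: "additive_poset le"
begin

lemma ap_refl: "le x x"
  and ap_antisym: "le x y \<Longrightarrow> le y x \<Longrightarrow> x = y"
  and ap_trans: "le x y \<Longrightarrow> le y z \<Longrightarrow> le x z"
  and ap_add_le: "le x z \<Longrightarrow> le y z \<Longrightarrow> le (x + y) z"
  and ap_le_add: "le z x \<Longrightarrow> le z y \<Longrightarrow> le z (z + x + y)"
  using ap unfolding additive_poset_def by blast+

lemma add_self_eq_zero: "x + x = (0::'a)"
proof -
  have "le (x + x) x" using ap_add_le ap_refl by blast
  then have "le (x + x + x) x" using ap_add_le ap_refl by blast
  moreover have "le x (x + x + x)" using ap_le_add ap_refl by blast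
  ultimately have "x + x + x = x" using ap_antisym by blast
  then show ?thesis by (metis add_right_imp_eq add_0 add.assoc add.commute)
qed

lemma add_add_self_left: "x + (x + y) = (y::'a)"
  by (simp flip: add.assoc add: add_self_eq_zero)

lemma add_eq_zero_iff_eq: "x + y = 0 \<longleftrightarrow> x = (y::'a)"
  by (metis add_add_self_left add_self_eq_zero add_0_right)

lemma le_imp_add_le: "le x y \<Longrightarrow> le (x + y) y"
  using ap_add_le ap_refl by blast

lemma independent_sym: "independent le x y \<Longrightarrow> independent le y x"
  unfolding independent_def
  using le_imp_add_le[of x "x + y"] by (simp add: add_add_self_left add.commute)

lemma independent_add:
  assumes "independent le c x" "independent le c y"
  shows "independent le c (x + y)"
proof -
  have "le c (c + (c + x) + (c + y))"
    using ap_le_add assms unfolding independent_def by blast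
  then show ?thesis
    unfolding independent_def by (simp add: add_add_self_left add.left_commute)
qed

lemma independent_add_sum_list:
  "independent le c x \<Longrightarrow> \<forall>y\<in>set ys. independent le c y
    \<Longrightarrow> independent le c (x + sum_list ys)"
proof (induction ys arbitrary: x)
  case (Cons y ys)
  then have "independent le c (x + y + sum_list ys)" by (simp add: independent_add)
  then show ?case by (simp add: add.assoc)
qed simp

lemma independent_of_upper_pair: "le a x \<Longrightarrow> le a y \<Longrightarrow> independent le a (x + y)"
  unfolding independent_def using ap_le_add by (simp add: add.assoc)

lemma independent_of_intervals:
  assumes "le x y" "le y z" "le z w"
  shows "independent le (x + y) (z + w)"
proof -
  have "le (x + y) z" using ap_trans le_imp_add_le assms by metis
  moreover have "le (x + y) w" using ap_trans assms calculation by metis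
  ultimately have "le (x + y) (x + y + z + w)" by (rule ap_le_add)
  then show ?thesis unfolding independent_def by (simp add: add.assoc)
qed

lemma chain_le:
  assumes steps: "\<forall>i<n. le (cs ! i) (cs ! Suc i)" and "i \<le> j" "j \<le> n"
  shows "le (cs ! i) (cs ! j)"
  using assms(2,3)
proof (induction j rule: dec_induct)
  case (step k)
  then have "le (cs ! k) (cs ! Suc k)" using steps by simp
  moreover have "le (cs ! i) (cs ! k)" using step by simp
  ultimately show ?case using ap_trans by blast
qed (rule ap_refl)

lemma chain_to_seq_in_indep_seqs:
  assumes "cs \<in> chains_from le a n"
  shows "chain_to_seq n cs \<in> indep_seqs le a n"
proof -
  have c0: "cs ! 0 = a" and less: "\<forall>i<n. ap_less le (cs ! i) (cs ! Suc i)"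
    using assms by (auto simp: chains_from_def)
  then have steps: "\<forall>i<n. le (cs ! i) (cs ! Suc i)" by (simp add: ap_less_def)
  have nth: "chain_to_seq n cs ! i = cs ! i + cs ! Suc i" if "i < n" for i
    using that by (simp add: chain_to_seq_def)
  have disjoint: "independent le (chain_to_seq n cs ! i) (chain_to_seq n cs ! j)"
    if "i < j" "j < n" for i j
    using independent_of_intervals[of "cs ! i" "cs ! Suc i" "cs ! j" "cs ! Suc j"]
      chain_le[OF steps] steps that by (simp add: nth)
  show ?thesis unfolding indep_seqs_def
  proof (intro CollectI conjI allI impI)
    fix i assume i: "i < n"
    show "chain_to_seq n cs ! i \<noteq> 0"
      using less i by (simp add: nth add_eq_zero_iff_eq ap_less_def)
    show "independent le a (chain_to_seq n cs ! i)"
      using independent_of_upper_pair chain_le[OF steps, of 0] i c0 by (simp add: nth)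
  next
    fix i j assume "i < n" "j < n" "i \<noteq> j"
    then show "independent le (chain_to_seq n cs ! i) (chain_to_seq n cs ! j)"
      using disjoint independent_sym by (metis linorder_neqE_nat)
  qed (simp add: chain_to_seq_def)
qed

lemma seq_to_chain_in_chains_from:
  assumes "bs \<in> indep_seqs le a n"
  shows "seq_to_chain a n bs \<in> chains_from le a n"
  unfolding chains_from_def
proof (intro CollectI conjI allI impI)
  fix i assume i: "i < n"
  have len: "length bs = n" and "bs ! i \<noteq> 0"
    and "independent le (bs ! i) a"
    and "\<forall>y\<in>set (take i bs). independent le (bs ! i) y"
    using assms i independent_sym
    by (auto simp: indep_seqs_def in_set_conv_nth)
  then have "independent le (a + sum_list (take i bs)) (bs ! i)"
    using independent_add_sum_list independent_sym by blast
  moreover have "seq_to_chain a n bs ! Suc i = seq_to_chain a n bs ! i + bs ! i"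
    using i len by (simp add: seq_to_chain_nth_Suc)
  ultimately show "ap_less le (seq_to_chain a n bs ! i) (seq_to_chain a n bs ! Suc i)"
    using \<open>bs ! i \<noteq> 0\<close> i
    by (simp add: seq_to_chain_nth ap_less_def independent_def add.assoc)
qed (simp_all add: seq_to_chain_def nth_Cons' del: upt_Suc)

lemma chain_to_seq_seq_to_chain:
  fixes bs :: "'a list"
  assumes "length bs = n"
  shows "chain_to_seq n (seq_to_chain a n bs) = bs"
proof (rule nth_equalityI)
  fix i assume "i < length (chain_to_seq n (seq_to_chain a n bs))"
  then show "chain_to_seq n (seq_to_chain a n bs) ! i = bs ! i"
    using assms by (simp add: chain_to_seq_def seq_to_chain_nth_Suc add_add_self_left)
qed (simp add: chain_to_seq_def assms)

lemma seq_to_chain_chain_to_seq: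
  assumes "cs \<in> chains_from le a n"
  shows "seq_to_chain a n (chain_to_seq n cs) = cs"
proof -
  have telescope: "cs ! 0 + sum_list (take i (chain_to_seq n cs)) = cs ! i" if "i \<le> n" for i
    using that
  proof (induction i)
    case (Suc i)
    then show ?case
      by (simp add: chain_to_seq_def take_Suc_conv_app_nth add_self_eq_zero
          flip: add.assoc)
  qed simp
  show ?thesis
    using assms telescope
    by (intro nth_equalityI) (auto simp: chains_from_def seq_to_chain_def nth_Cons'
        simp del: upt_Suc)
qed

end

theorem lemma4p3:
  fixes le :: "'a::ab_group_add \<Rightarrow> 'a \<Rightarrow> bool" and a :: 'a and n :: nat
  assumes "additive_poset le" and "n \<ge> 1"
  shows "bij_betw (chain_to_seq n) (chains_from le a n) (indep_seqs le a n)
    \<and> (\<forall>bs\<in>indep_seqs le a n. seq_to_chain a n bs \<in> chains_from le a n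
          \<and> chain_to_seq n (seq_to_chain a n bs) = bs)
    \<and> (\<forall>cs\<in>chains_from le a n. seq_to_chain a n (chain_to_seq n cs) = cs)"
proof -
  note ap = assms(1)
  have inverse: "\<forall>bs\<in>indep_seqs le a n. seq_to_chain a n bs \<in> chains_from le a n
      \<and> chain_to_seq n (seq_to_chain a n bs) = bs"
    using seq_to_chain_in_chains_from[OF ap] chain_to_seq_seq_to_chain[OF ap]
      indep_seqs_def by blast
  moreover have "bij_betw (chain_to_seq n) (chains_from le a n) (indep_seqs le a n)"
    using inverse chain_to_seq_in_indep_seqs[OF ap] seq_to_chain_chain_to_seq[OF ap]
    by (intro bij_betw_byWitness[where f' = "seq_to_chain a n"]) auto
  ultimately show ?thesis using seq_to_chain_chain_to_seq[OF ap] by blast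
qed

end
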